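(* For each integer $d\ge 1$ let $\Delta^{d-1}=\{p\in\mathbb{R}^d_{\ge 0}:\sum_{f=1}^d p_f=1\}$ be the standard simplex, and let \[ \Psi^{(d)}:\mathbb{R}_{\ge 0}^d\setminus\{0\}\to \Delta^{d-1} \] be a map (a "local share rule"). Assume the family $\{\Psi^{(d)}\}_{d\ge 1}$ satisfies refinement consistency: for every $d\ge1$, every $a=(a_1,\dots,a_d)\in\mathbb{R}^d_{\ge0}\setminus\{0\}$, every index $k\in\{1,\dots,d\}$ and every $r,q\ge 0$ with $r+q=a_k$, the refined vector \[ a^{[k\to(r,q)]}=(a_1,\dots,a_{k-1},r,q,a_{k+1},\dots,a_d)\in\mathbb{R}^{d+1}_{\ge0} \] satisfies, when $a_k>0$, \[ \Psi^{(d+1)}\!\left(a^{[k\to(r,q)]}\right)=\left(\Psi_1^{(d)}(a),\dots,\Psi_{k-1}^{(d)}(a),\tfrac{r}{a_k}\Psi_k^{(d)}(a),\tfrac{q}{a_k}\Psi_k^{(d)}(a),\Psi_{k+1}^{(d)}(a),\dots,\Psi_d^{(d)}(a)\right), \] and, when $a_k=0$, $\Psi^{(d+1)}(a^{[k\to(0,0)]})$ agrees with $\Psi^{(d)}(a)$ on all non-refined coordinates (in the same order) and assigns the value $0$ to the two refined coordinates. Then for every $d\ge1$, every $a\in\mathbb{R}^d_{\ge0}\setminus\{0\}$ and every $f\in\{1,\dots,d\}$, \[ \Psi^{(d)}_f(a)=\frac{a_f}{\sum_{g=1}^d a_g}. \]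
   Context: The requirement that each $\Psi^{(d)}$ takes values in the simplex (nonnegative entries summing to one) is called "budgeting". Entries $a_f$ are interpreted as nonnegative local efforts of factors. *)

theory Defs
  imports Complex_Main
begin

text \<open>Vectors in R^d are represented as real lists of length d (0-indexed).
  A family of local share rules Psi^(d), d >= 1, is a single function on lists;
  Psi^(d) is its restriction to lists of length d.\<close>

definition nonneg_nonzero :: "real list \<Rightarrow> bool" where
  "nonneg_nonzero a \<longleftrightarrow> (\<forall>x\<in>set a. 0 \<le> x) \<and> (\<exists>x\<in>set a. x \<noteq> 0)"

definition in_simplex :: "nat \<Rightarrow> real list \<Rightarrow> bool" where
  "in_simplex d p \<longleftrightarrow> length p = d \<and> (\<forall>x\<in>set p. 0 \<le> x) \<and> sum_list p = 1"

definition refine :: "'a list \<Rightarrow> nat \<Rightarrow> 'a \<Rightarrow> 'a \<Rightarrow> 'a list" where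
  "refine a k r q = take k a @ [r, q] @ drop (Suc k) a"

end

theory Submission
  imports Defs
begin

text \<open>Write \<open>S\<close> for the total effort of \<open>a\<close>. Merging all entries from position \<open>j\<close> on into a
  single one gives a vector \<open>lump_tail j a\<close> of total \<open>S\<close>; for \<open>j = 0\<close> it is \<open>[S]\<close>, whose share
  is \<open>[1]\<close> by budgeting, and \<open>lump_tail (j + 1) a\<close> arises from \<open>lump_tail j a\<close> by splitting its
  last entry into \<open>a ! j\<close> and the rest. Refinement consistency says exactly that splitting an
  entry preserves the property "every share is effort divided by \<open>S\<close>", so by induction
  on \<open>j\<close> the property reaches \<open>lump_tail (length a - 1) a = a\<close>.\<close>

lemma nonneg_nonzero_iff_sum_pos:
  "nonneg_nonzero b \<longleftrightarrow> (\<forall>x\<in>set b. 0 \<le> x) \<and> 0 < sum_list b"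
  unfolding nonneg_nonzero_def
  using sum_list_nonneg_eq_0_iff[of b] sum_list_nonneg[of b] by fastforce

lemma in_simplex_1_iff: "in_simplex 1 p \<longleftrightarrow> p = [1]"
  by (cases p) (auto simp: in_simplex_def)

definition lump_tail :: "nat \<Rightarrow> real list \<Rightarrow> real list" where
  "lump_tail j a = take j a @ [sum_list (drop j a)]"

lemma sum_list_lump_tail: "sum_list (lump_tail j a) = sum_list a"
  by (simp add: lump_tail_def flip: sum_list_append[of "take j a" "drop j a"])

lemma lump_tail_Suc:
  assumes "j < length a"
  shows "lump_tail (Suc j) a = refine (lump_tail j a) j (a ! j) (sum_list (drop (Suc j) a))"
  using assms by (simp add: lump_tail_def refine_def take_Suc_conv_app_nth)

lemma nth_lump_tail:
  assumes "j < length a"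
  shows "lump_tail j a ! j = a ! j + sum_list (drop (Suc j) a)"
proof -
  from assms have "drop j a = a ! j # drop (Suc j) a" by (simp add: Cons_nth_drop_Suc)
  with assms show ?thesis by (simp add: lump_tail_def nth_append)
qed

lemma lump_tail_last: "a \<noteq> [] \<Longrightarrow> lump_tail (length a - 1) a = a"
  by (induction a rule: rev_induct) (simp_all add: lump_tail_def)

lemma nonneg_nonzero_lump_tail:
  assumes "nonneg_nonzero a"
  shows "nonneg_nonzero (lump_tail j a)"
proof -
  from assms have nonneg: "\<forall>x\<in>set a. 0 \<le> x" and pos: "0 < sum_list a"
    by (simp_all add: nonneg_nonzero_iff_sum_pos)
  have "\<forall>x\<in>set (lump_tail j a). 0 \<le> x"
    using nonneg set_take_subset[of j a] set_drop_subset[of j a]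
    by (auto simp: lump_tail_def intro!: sum_list_nonneg)
  with pos show ?thesis by (simp add: nonneg_nonzero_iff_sum_pos sum_list_lump_tail)
qed

lemma refine_map: "refine (map g b) k (g r) (g q) = map g (refine b k r q)"
  by (simp add: refine_def take_map drop_map)

locale share_rule_family =
  fixes Psi :: "real list \<Rightarrow> real list"
  assumes budget: "\<And>a. nonneg_nonzero a \<Longrightarrow> in_simplex (length a) (Psi a)"
    and refine_pos: "\<And>a k r q. nonneg_nonzero a \<Longrightarrow> k < length a \<Longrightarrow> 0 \<le> r \<Longrightarrow> 0 \<le> q
        \<Longrightarrow> r + q = a ! k \<Longrightarrow> 0 < a ! k
        \<Longrightarrow> Psi (refine a k r q) = refine (Psi a) k (r / a ! k * Psi a ! k) (q / a ! k * Psi a ! k)"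
    and refine_zero: "\<And>a k. nonneg_nonzero a \<Longrightarrow> k < length a \<Longrightarrow> a ! k = 0
        \<Longrightarrow> Psi (refine a k 0 0) = refine (Psi a) k 0 0"
begin

lemma Psi_singleton: "0 < x \<Longrightarrow> Psi [x] = [1]"
  using budget[of "[x]"] in_simplex_1_iff[of "Psi [x]"] by (simp add: nonneg_nonzero_def)

lemma Psi_refine_scaled:
  assumes b: "nonneg_nonzero b" and Psi_b: "Psi b = map (\<lambda>x. x / c) b"
    and k: "k < length b" and r: "0 \<le> r" and q: "0 \<le> q" and rq: "r + q = b ! k"
  shows "Psi (refine b k r q) = map (\<lambda>x. x / c) (refine b k r q)"
proof (cases "b ! k = 0")
  case True
  with r q rq have "r = 0" "q = 0" by auto
  with refine_zero[OF b k True] Psi_b show ?thesis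
    by (simp flip: refine_map)
next
  case False
  with r q rq have "0 < b ! k" by linarith
  with refine_pos[OF b k r q rq] Psi_b k show ?thesis
    by (simp flip: refine_map)
qed

lemma Psi_lump_tail:
  assumes a: "nonneg_nonzero a" and j: "j < length a"
  shows "Psi (lump_tail j a) = map (\<lambda>x. x / sum_list a) (lump_tail j a)"
  using j
proof (induction j)
  case 0
  from a have "0 < sum_list a" by (simp add: nonneg_nonzero_iff_sum_pos)
  then show ?case by (simp add: lump_tail_def Psi_singleton)
next
  case (Suc j)
  then have j: "j < length a" by simp
  from a have nonneg: "\<forall>x\<in>set a. 0 \<le> x"
    by (simp add: nonneg_nonzero_def)
  have "0 \<le> sum_list (drop (Suc j) a)"
    using nonneg set_drop_subset[of "Suc j" a] by (auto intro!: sum_list_nonneg)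
  moreover have "j < length (lump_tail j a)"
    using j by (simp add: lump_tail_def)
  ultimately show ?case
    unfolding lump_tail_Suc[OF j]
    using Psi_refine_scaled[OF nonneg_nonzero_lump_tail[OF a] Suc.IH] nonneg j
    by (simp add: nth_lump_tail)
qed

lemma Psi_proportional:
  assumes "nonneg_nonzero a"
  shows "Psi a = map (\<lambda>x. x / sum_list a) a"
proof -
  from assms have "a \<noteq> []" by (auto simp: nonneg_nonzero_def)
  then have "lump_tail (length a - 1) a = a" by (rule lump_tail_last)
  with Psi_lump_tail[OF assms, of "length a - 1"] \<open>a \<noteq> []\<close> show ?thesis
    by simp
qed

end

theorem theorem4p1:
  fixes Psi :: "real list \<Rightarrow> real list"
  assumes budget: "\<And>a. nonneg_nonzero a \<Longrightarrow> in_simplex (length a) (Psi a)"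
    and refine_pos: "\<And>a k r q. nonneg_nonzero a \<Longrightarrow> k < length a \<Longrightarrow> 0 \<le> r \<Longrightarrow> 0 \<le> q
        \<Longrightarrow> r + q = a ! k \<Longrightarrow> 0 < a ! k
        \<Longrightarrow> Psi (refine a k r q) = refine (Psi a) k (r / a ! k * Psi a ! k) (q / a ! k * Psi a ! k)"
    and refine_zero: "\<And>a k. nonneg_nonzero a \<Longrightarrow> k < length a \<Longrightarrow> a ! k = 0
        \<Longrightarrow> Psi (refine a k 0 0) = refine (Psi a) k 0 0"
    and a: "nonneg_nonzero a" and f: "f < length a"
  shows "Psi a ! f = a ! f / sum_list a"
proof -
  interpret share_rule_family Psi
    using budget refine_pos refine_zero by unfold_locales
  from Psi_proportional[OF a] f show ?thesis by simp
qed

end
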